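(* For every $\alpha\in(0,\tfrac12)$ there is an online algorithm for non-clairvoyant dynamic bin packing whose total migrated size is at most a $\frac{\alpha}{1-2\alpha}$-fraction of the total size of the items, and which at every time $t$ has at most $\frac{1}{\alpha}\mathrm{OPT}_t+1$ open bins.
   Context: Dynamic bin packing: bins have capacity $1$; items arrive online at times $a_i\ge0$ with size $s_i\in[0,1]$ and duration $d_i>0$ (only the size is revealed at arrival), present during $[a_i,a_i+d_i)$. Each item is placed on arrival into an open bin with enough remaining capacity or a new bin; a migration moves an already placed item to another bin. In the size-cost model, each migration of item $i$ costs $s_i$; the total migrated size is the sum of these costs, and the total size of the items is $\sum_i s_i$. A bin is open while nonempty. $\mathrm{OPT}_t$ is the minimum number of unit bins needed to pack the items present at time $t$. *)

theory Defs
  imports Complex_Main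
begin

text \<open>An instance with n items: item i < n arrives at time a i, has size s i and
  duration d i; it is present during the interval [a i, a i + d i).\<close>

definition valid_instance :: "nat \<Rightarrow> (nat \<Rightarrow> real) \<Rightarrow> (nat \<Rightarrow> real) \<Rightarrow> (nat \<Rightarrow> real) \<Rightarrow> bool" where
  "valid_instance n a s d \<longleftrightarrow> (\<forall>i<n. 0 \<le> a i \<and> 0 \<le> s i \<and> s i \<le> 1 \<and> 0 < d i)"

definition present :: "nat \<Rightarrow> (nat \<Rightarrow> real) \<Rightarrow> (nat \<Rightarrow> real) \<Rightarrow> real \<Rightarrow> nat set" where
  "present n a d t = {i. i < n \<and> a i \<le> t \<and> t < a i + d i}"

text \<open>Information revealed to a non-clairvoyant online algorithm by time t:
  for every item that has arrived, its arrival time and size, and its departure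
  time if it has already departed. Nothing is known about future items or
  about durations of items still present.\<close>

type_synonym view = "nat \<Rightarrow> (real \<times> real \<times> real option) option"

definition view_at :: "nat \<Rightarrow> (nat \<Rightarrow> real) \<Rightarrow> (nat \<Rightarrow> real) \<Rightarrow> (nat \<Rightarrow> real) \<Rightarrow> real \<Rightarrow> view" where
  "view_at n a s d t = (\<lambda>i. if i < n \<and> a i \<le> t
      then Some (a i, s i, if a i + d i \<le> t then Some (a i + d i) else None)
      else None)"

type_synonym algorithm = "view \<Rightarrow> nat \<Rightarrow> nat"

definition alg_packing :: "algorithm \<Rightarrow> nat \<Rightarrow> (nat \<Rightarrow> real) \<Rightarrow> (nat \<Rightarrow> real) \<Rightarrow> (nat \<Rightarrow> real) \<Rightarrow> real \<Rightarrow> nat \<Rightarrow> nat" where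
  "alg_packing A n a s d t = A (view_at n a s d t)"

definition feasible_at :: "algorithm \<Rightarrow> nat \<Rightarrow> (nat \<Rightarrow> real) \<Rightarrow> (nat \<Rightarrow> real) \<Rightarrow> (nat \<Rightarrow> real) \<Rightarrow> real \<Rightarrow> bool" where
  "feasible_at A n a s d t \<longleftrightarrow>
     (\<forall>b. (\<Sum>i\<in>{i\<in>present n a d t. alg_packing A n a s d t i = b}. s i) \<le> 1)"

definition open_bins :: "algorithm \<Rightarrow> nat \<Rightarrow> (nat \<Rightarrow> real) \<Rightarrow> (nat \<Rightarrow> real) \<Rightarrow> (nat \<Rightarrow> real) \<Rightarrow> real \<Rightarrow> nat" where
  "open_bins A n a s d t = card (alg_packing A n a s d t ` present n a d t)"

definition OPT :: "nat \<Rightarrow> (nat \<Rightarrow> real) \<Rightarrow> (nat \<Rightarrow> real) \<Rightarrow> (nat \<Rightarrow> real) \<Rightarrow> real \<Rightarrow> nat" where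
  "OPT n a s d t = (LEAST k. \<exists>f :: nat \<Rightarrow> nat.
      (\<forall>i\<in>present n a d t. f i < k) \<and>
      (\<forall>b<k. (\<Sum>i\<in>{i\<in>present n a d t. f i = b}. s i) \<le> 1))"

definition event_times :: "nat \<Rightarrow> (nat \<Rightarrow> real) \<Rightarrow> (nat \<Rightarrow> real) \<Rightarrow> real set" where
  "event_times n a d = a ` {..<n} \<union> (\<lambda>i. a i + d i) ` {..<n}"

text \<open>The packing only changes at event times; item i migrates at an event time t
  strictly inside its lifetime if its bin differs from its bin at the previous
  event time.\<close>

definition migrations :: "algorithm \<Rightarrow> nat \<Rightarrow> (nat \<Rightarrow> real) \<Rightarrow> (nat \<Rightarrow> real) \<Rightarrow> (nat \<Rightarrow> real) \<Rightarrow> nat \<Rightarrow> nat" where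
  "migrations A n a s d i = card {t \<in> event_times n a d. a i < t \<and> t < a i + d i \<and>
      alg_packing A n a s d t i \<noteq>
      alg_packing A n a s d (Max {e \<in> event_times n a d. e < t}) i}"

definition migrated_size :: "algorithm \<Rightarrow> nat \<Rightarrow> (nat \<Rightarrow> real) \<Rightarrow> (nat \<Rightarrow> real) \<Rightarrow> (nat \<Rightarrow> real) \<Rightarrow> real" where
  "migrated_size A n a s d = (\<Sum>i<n. s i * real (migrations A n a s d i))"

end

theory Submission
  imports Defs "HOL-Library.Product_Lexorder"
begin

text \<open>Items of size at least \<open>\<alpha>\<close> get a bin of their own; smaller items are packed into a
  single open bin, and when an item does not fit, the open bin is closed with load above
  \<open>1 - \<alpha>\<close> and a fresh bin is opened. When a departure leaves a closed bin with load below
  \<open>\<alpha>\<close>, its items are moved into the open bin if they fit; otherwise the open bin, whose load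
  then exceeds \<open>1 - \<alpha>\<close>, is closed and the underfull bin becomes the open one. So every bin
  except the open one has load at least \<open>\<alpha>\<close>, which gives at most \<open>OPT / \<alpha> + 1\<close> bins.

  For the migrations, every closed bin of load \<open>l\<close> carries the potential
  \<open>\<alpha> / (1 - 2\<alpha>) * max 0 (1 - \<alpha> - l)\<close>. Departures raise the potential by at most
  \<open>\<alpha> / (1 - 2\<alpha>)\<close> times the departed size, closing a bin is free since its load exceeds
  \<open>1 - \<alpha>\<close>, and dissolving a bin of load \<open>l < \<alpha>\<close> releases at least \<open>l\<close>, which pays for
  the migrated size \<open>l\<close>. Hence the migrated size never exceeds \<open>\<alpha> / (1 - 2\<alpha>)\<close> times the
  total size of the departed items.\<close>

lemma filter_sorted_le_split:
  fixes f :: "'a \<Rightarrow> 'b::linorder"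
  assumes "sorted (map f xs)" and "t' \<le> t"
  shows "filter (\<lambda>x. f x \<le> t) xs = filter (\<lambda>x. f x \<le> t') xs @ filter (\<lambda>x. t' < f x \<and> f x \<le> t) xs"
  using assms(1)
proof (induction xs)
  case (Cons x xs)
  show ?case
  proof (cases "f x \<le> t'")
    case True
    then show ?thesis using Cons assms(2) by auto
  next
    case False
    with Cons.prems have later: "\<forall>y\<in>set xs. t' < f y" by auto
    then have "filter (\<lambda>y. f y \<le> t') xs = []" by (auto simp: filter_empty_conv)
    moreover have "filter (\<lambda>y. t' < f y \<and> f y \<le> t) xs = filter (\<lambda>y. f y \<le> t) xs"
      using later by (auto intro: filter_cong)
    ultimately show ?thesis using False by simp
  qed
qed simp

lemma sorted_map_fst_lex: "sorted xs \<Longrightarrow> sorted (map fst (xs :: ('a::linorder \<times> 'b::linorder) list))"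
  by (rule sorted_map_mono) (auto simp: mono_on_def less_eq_prod_def)

lemma sorted_list_of_set_filter:
  fixes A :: "'a::linorder set"
  assumes "finite A"
  shows "sorted_list_of_set {x\<in>A. P x} = filter P (sorted_list_of_set A)"
  by (rule strict_sorted_equal) (use assms in \<open>auto intro: sorted_wrt_filter\<close>)

lemma card_increase_points_le:
  fixes g :: "'a::linorder \<Rightarrow> nat"
  assumes "finite E" and "mono g" and "T \<subseteq> E"
    and "\<And>t. t \<in> T \<Longrightarrow> g (Max {e\<in>E. e < t}) < g t"
    and "\<And>t. t \<in> T \<Longrightarrow> g t \<le> M"
  shows "card T \<le> M"
proof -
  define f where "f t = g (Max {e\<in>E. e < t})" for t
  have "f t1 < f t2" if "t1 \<in> T" "t2 \<in> T" "t1 < t2" for t1 t2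
  proof -
    have "t1 \<le> Max {e\<in>E. e < t2}"
      using that assms(1,3) by (intro Max_ge) auto
    then have "g t1 \<le> f t2" unfolding f_def by (rule monoD[OF assms(2)])
    then show ?thesis using assms(4)[OF that(1)] unfolding f_def by simp
  qed
  then have "inj_on f T" by (intro strict_mono_on_imp_inj_on) (auto simp: strict_mono_on_def)
  moreover have "f ` T \<subseteq> {..<M}"
    using assms(4,5) unfolding f_def by (auto intro: less_le_trans)
  ultimately show ?thesis using card_inj_on_le[of f T "{..<M}"] by simp
qed

lemma card_le_sum_div_plus_one:
  fixes w :: "'a \<Rightarrow> real"
  assumes "finite L" and "0 < c" and "\<And>B. B \<in> L \<Longrightarrow> 0 \<le> w B"
    and "\<And>B. B \<in> L \<Longrightarrow> B \<noteq> b \<Longrightarrow> c \<le> w B"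
  shows "real (card L) \<le> (\<Sum>B\<in>L. w B) / c + 1"
proof -
  have "c * (real (card L) - 1) \<le> c * real (card (L - {b}))"
    using assms(1,2) by (intro mult_left_mono) (auto simp: card_Diff_singleton_if)
  also have "\<dots> = (\<Sum>B\<in>L - {b}. c)" by simp
  also have "\<dots> \<le> (\<Sum>B\<in>L - {b}. w B)" using assms(4) by (intro sum_mono) auto
  also have "\<dots> \<le> (\<Sum>B\<in>L. w B)" using assms(1,3) by (intro sum_mono2) auto
  finally have "real (card L) - 1 \<le> (\<Sum>B\<in>L. w B) / c"
    using assms(2) by (simp add: pos_le_divide_eq mult.commute)
  then show ?thesis by simp
qed

lemma present_size_le_OPT:
  assumes "valid_instance n a s d"
  shows "(\<Sum>i\<in>present n a d t. s i) \<le> real (OPT n a s d t)"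
proof -
  let ?P = "present n a d t"
  let ?packs = "\<lambda>k. \<exists>f :: nat \<Rightarrow> nat. (\<forall>i\<in>?P. f i < k) \<and> (\<forall>b<k. (\<Sum>i\<in>{i\<in>?P. f i = b}. s i) \<le> 1)"
  have "?packs n"
  proof (intro exI[of _ id] conjI allI impI ballI)
    fix b assume "b < n"
    have "(\<Sum>i\<in>{i\<in>?P. id i = b}. s i) \<le> (\<Sum>i\<in>{b}. s i)"
      using assms \<open>b < n\<close> unfolding valid_instance_def by (intro sum_mono2) auto
    then show "(\<Sum>i\<in>{i\<in>?P. id i = b}. s i) \<le> 1"
      using assms \<open>b < n\<close> unfolding valid_instance_def by auto
  qed (auto simp: present_def)
  then have "?packs (OPT n a s d t)" unfolding OPT_def by (rule LeastI)
  then obtain f where f: "\<forall>i\<in>?P. f i < OPT n a s d t"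
    "\<forall>b<OPT n a s d t. (\<Sum>i\<in>{i\<in>?P. f i = b}. s i) \<le> 1" by blast
  have "(\<Sum>i\<in>?P. s i) = (\<Sum>b<OPT n a s d t. \<Sum>i\<in>{i\<in>?P. f i = b}. s i)"
    using f(1) by (intro sum.group[symmetric]) (auto simp: present_def)
  also have "\<dots> \<le> (\<Sum>b<OPT n a s d t. 1)" using f(2) by (intro sum_mono) auto
  finally show ?thesis by simp
qed

section \<open>Packing states\<close>

text \<open>Bin \<open>2 * i + 1\<close> is reserved for a large item \<open>i\<close>; small items go into the bins
  \<open>2 * k\<close> with \<open>k < bins_used s\<close>. A departed item may be recorded before its
  arrival; this never happens for events processed in chronological order.\<close>

record state =
  arrived :: "nat set"
  departed :: "nat set"
  item_size :: "nat \<Rightarrow> real"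
  bin :: "nat \<Rightarrow> nat"
  moves :: "nat \<Rightarrow> nat"
  open_bin :: nat
  bins_used :: nat

definition present_items :: "state \<Rightarrow> nat set" where
  "present_items s = arrived s - departed s"

definition contents :: "state \<Rightarrow> nat \<Rightarrow> nat set" where
  "contents s B = {j\<in>present_items s. bin s j = B}"

definition load :: "state \<Rightarrow> nat \<Rightarrow> real" where
  "load s B = (\<Sum>j\<in>contents s B. item_size s j)"

definition occupied_bins :: "state \<Rightarrow> nat set" where
  "occupied_bins s = bin s ` present_items s"

definition closed_bins :: "state \<Rightarrow> nat set" where
  "closed_bins s = {B\<in>occupied_bins s. even B \<and> B \<noteq> open_bin s}"

definition migrated_volume :: "state \<Rightarrow> real" where
  "migrated_volume s = (\<Sum>i\<in>arrived s. item_size s i * real (moves s i))"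

definition departed_volume :: "state \<Rightarrow> real" where
  "departed_volume s = (\<Sum>i\<in>arrived s \<inter> departed s. item_size s i)"

definition remove_item :: "nat \<Rightarrow> state \<Rightarrow> state" where
  "remove_item i s = s\<lparr>departed := insert i (departed s)\<rparr>"

definition merge_into_open :: "nat \<Rightarrow> state \<Rightarrow> state" where
  "merge_into_open B s =
     s\<lparr>bin := (\<lambda>j. if j \<in> contents s B then open_bin s else bin s j),
       moves := (\<lambda>j. if j \<in> contents s B then Suc (moves s j) else moves s j)\<rparr>"

definition record_arrival :: "nat \<Rightarrow> real \<Rightarrow> state \<Rightarrow> state" where
  "record_arrival i x s = s\<lparr>arrived := insert i (arrived s), item_size := (item_size s)(i := x)\<rparr>"

definition place :: "nat \<Rightarrow> real \<Rightarrow> nat \<Rightarrow> state \<Rightarrow> state" where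
  "place i x B s = s\<lparr>arrived := insert i (arrived s), item_size := (item_size s)(i := x),
     bin := (bin s)(i := B)\<rparr>"

definition open_fresh_bin :: "state \<Rightarrow> state" where
  "open_fresh_bin s = s\<lparr>open_bin := 2 * bins_used s, bins_used := Suc (bins_used s)\<rparr>"

definition init_state :: state where
  "init_state = \<lparr>arrived = {}, departed = {}, item_size = (\<lambda>_. 0), bin = (\<lambda>_. 0),
     moves = (\<lambda>_. 0), open_bin = 0, bins_used = 1\<rparr>"

lemma remove_item_simps [simp]:
  "arrived (remove_item i s) = arrived s" "departed (remove_item i s) = insert i (departed s)"
  "item_size (remove_item i s) = item_size s" "bin (remove_item i s) = bin s"
  "moves (remove_item i s) = moves s" "open_bin (remove_item i s) = open_bin s"
  "bins_used (remove_item i s) = bins_used s"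
  by (simp_all add: remove_item_def)

lemma merge_into_open_simps [simp]:
  "arrived (merge_into_open B s) = arrived s" "departed (merge_into_open B s) = departed s"
  "item_size (merge_into_open B s) = item_size s"
  "bin (merge_into_open B s) = (\<lambda>j. if j \<in> contents s B then open_bin s else bin s j)"
  "moves (merge_into_open B s) = (\<lambda>j. if j \<in> contents s B then Suc (moves s j) else moves s j)"
  "open_bin (merge_into_open B s) = open_bin s" "bins_used (merge_into_open B s) = bins_used s"
  by (simp_all add: merge_into_open_def)

lemma record_arrival_simps [simp]:
  "arrived (record_arrival i x s) = insert i (arrived s)" "departed (record_arrival i x s) = departed s"
  "item_size (record_arrival i x s) = (item_size s)(i := x)" "bin (record_arrival i x s) = bin s"
  "moves (record_arrival i x s) = moves s" "open_bin (record_arrival i x s) = open_bin s"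
  "bins_used (record_arrival i x s) = bins_used s"
  by (simp_all add: record_arrival_def)

lemma place_simps [simp]:
  "arrived (place i x B s) = insert i (arrived s)" "departed (place i x B s) = departed s"
  "item_size (place i x B s) = (item_size s)(i := x)" "bin (place i x B s) = (bin s)(i := B)"
  "moves (place i x B s) = moves s" "open_bin (place i x B s) = open_bin s"
  "bins_used (place i x B s) = bins_used s"
  by (simp_all add: place_def)

lemma open_fresh_bin_simps [simp]:
  "arrived (open_fresh_bin s) = arrived s" "departed (open_fresh_bin s) = departed s"
  "item_size (open_fresh_bin s) = item_size s" "bin (open_fresh_bin s) = bin s"
  "moves (open_fresh_bin s) = moves s" "open_bin (open_fresh_bin s) = 2 * bins_used s"
  "bins_used (open_fresh_bin s) = Suc (bins_used s)"
  by (simp_all add: open_fresh_bin_def)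

lemma present_items_subset_arrived: "present_items s \<subseteq> arrived s"
  unfolding present_items_def by auto

lemma finite_present_items: "finite (arrived s) \<Longrightarrow> finite (present_items s)"
  unfolding present_items_def by auto

lemma finite_contents: "finite (arrived s) \<Longrightarrow> finite (contents s B)"
  unfolding contents_def by (auto dest: finite_present_items)

lemma finite_occupied_bins: "finite (arrived s) \<Longrightarrow> finite (occupied_bins s)"
  unfolding occupied_bins_def by (auto dest: finite_present_items)

lemma finite_closed_bins: "finite (arrived s) \<Longrightarrow> finite (closed_bins s)"
  unfolding closed_bins_def by (auto dest: finite_occupied_bins)

lemma load_eq_0: "B \<notin> occupied_bins s \<Longrightarrow> load s B = 0"
  unfolding load_def contents_def occupied_bins_def by (auto intro: sum.neutral)

lemma load_cong:
  assumes "present_items s' = present_items s"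
    and "\<And>j. j \<in> present_items s \<Longrightarrow> bin s' j = bin s j \<and> item_size s' j = item_size s j"
  shows "load s' = load s"
  unfolding load_def contents_def using assms by (intro ext sum.cong) auto

lemma sum_load_occupied_bins:
  "finite (arrived s) \<Longrightarrow> (\<Sum>B\<in>occupied_bins s. load s B) = (\<Sum>j\<in>present_items s. item_size s j)"
  unfolding load_def contents_def occupied_bins_def
  by (rule sum.group) (auto dest: finite_present_items)

lemma present_items_remove_item: "present_items (remove_item i s) = present_items s - {i}"
  unfolding present_items_def by auto

lemma load_remove_item:
  assumes "finite (arrived s)" and "i \<in> present_items s"
  shows "load (remove_item i s) B = load s B - (if bin s i = B then item_size s i else 0)"
proof -
  have "contents (remove_item i s) B = contents s B - {i}"
    unfolding contents_def present_items_remove_item by auto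
  then show ?thesis
    using assms finite_contents[OF assms(1)] unfolding load_def by (auto simp: contents_def sum_diff1)
qed

lemma departed_volume_remove_item:
  assumes "finite (arrived s)" and "i \<in> present_items s"
  shows "departed_volume (remove_item i s) = departed_volume s + item_size s i"
proof -
  have "arrived s \<inter> insert i (departed s) = insert i (arrived s \<inter> departed s)"
    and "i \<notin> arrived s \<inter> departed s"
    using assms(2) unfolding present_items_def by auto
  then show ?thesis using assms(1) by (simp add: departed_volume_def)
qed

lemma present_items_merge_into_open [simp]: "present_items (merge_into_open B s) = present_items s"
  unfolding present_items_def by simp

lemma contents_merge_into_open:
  assumes "B \<noteq> open_bin s"
  shows "contents (merge_into_open B s) B' =
    (if B' = B then {} else if B' = open_bin s then contents s (open_bin s) \<union> contents s B
     else contents s B')"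
  using assms by (auto simp: contents_def)

lemma load_merge_into_open:
  assumes "finite (arrived s)" and "B \<noteq> open_bin s"
  shows "load (merge_into_open B s) B' =
    (if B' = B then 0 else if B' = open_bin s then load s (open_bin s) + load s B else load s B')"
proof -
  have "contents s (open_bin s) \<inter> contents s B = {}"
    using assms(2) unfolding contents_def by auto
  then show ?thesis
    using assms finite_contents[OF assms(1)] unfolding load_def contents_merge_into_open[OF assms(2)]
    by (simp add: sum.union_disjoint)
qed

lemma migrated_volume_merge_into_open:
  assumes "finite (arrived s)"
  shows "migrated_volume (merge_into_open B s) = migrated_volume s + load s B"
proof -
  have "migrated_volume (merge_into_open B s) =
      (\<Sum>i\<in>arrived s. item_size s i * real (moves s i) + (if i \<in> contents s B then item_size s i else 0))"
    unfolding migrated_volume_def by (intro sum.cong) (auto simp: algebra_simps)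
  also have "\<dots> = migrated_volume s + (\<Sum>i\<in>arrived s. if i \<in> contents s B then item_size s i else 0)"
    unfolding migrated_volume_def by (simp add: sum.distrib)
  also have "(\<Sum>i\<in>arrived s. if i \<in> contents s B then item_size s i else 0) = load s B"
    unfolding load_def using assms present_items_subset_arrived
    by (intro sum.mono_neutral_cong_right) (auto simp: contents_def)
  finally show ?thesis .
qed

lemma present_items_record_arrival:
  "i \<in> departed s \<Longrightarrow> present_items (record_arrival i x s) = present_items s"
  unfolding present_items_def by auto

lemma present_items_place:
  "i \<notin> departed s \<Longrightarrow> present_items (place i x B s) = insert i (present_items s)"
  unfolding present_items_def by auto

lemma load_place:
  assumes "finite (arrived s)" and "i \<notin> arrived s" and "i \<notin> departed s"
  shows "load (place i x B s) B' = load s B' + (if B' = B then x else 0)"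
proof -
  have i: "i \<notin> contents s B'"
    using assms(2) present_items_subset_arrived unfolding contents_def by auto
  have "contents (place i x B s) B' = (if B' = B then insert i (contents s B') else contents s B')"
    using i assms(3) unfolding contents_def present_items_place[OF assms(3)] by auto
  moreover have "(\<Sum>j\<in>contents s B'. item_size (place i x B s) j) = load s B'"
    unfolding load_def using i by (intro sum.cong) auto
  ultimately show ?thesis
    using i finite_contents[OF assms(1)] by (cases "B' = B") (simp_all add: load_def)
qed

lemma occupied_bins_place:
  "i \<notin> arrived s \<Longrightarrow> i \<notin> departed s \<Longrightarrow> occupied_bins (place i x B s) = insert B (occupied_bins s)"
  using present_items_subset_arrived unfolding occupied_bins_def present_items_place by force

lemma migrated_volume_place:
  assumes "finite (arrived s)" and "i \<notin> arrived s" and "moves s i = 0"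
  shows "migrated_volume (place i x B s) = migrated_volume s"
  using assms unfolding migrated_volume_def by (auto intro!: sum.cong)

lemma departed_volume_place:
  "i \<notin> departed s \<Longrightarrow> departed_volume (place i x B s) = departed_volume s"
  unfolding departed_volume_def by (auto intro!: sum.cong)

section \<open>The algorithm and its invariant\<close>

locale dynamic_packing =
  fixes \<alpha> :: real
  assumes alpha_pos: "0 < \<alpha>" and alpha_less_half: "\<alpha> < 1/2"
begin

definition ratio :: real where
  "ratio = \<alpha> / (1 - 2 * \<alpha>)"

definition deficit :: "real \<Rightarrow> real" where
  "deficit l = ratio * max 0 (1 - \<alpha> - l)"

definition potential :: "state \<Rightarrow> real" where
  "potential s = (\<Sum>B\<in>closed_bins s. deficit (load s B))"

definition underfull_bins :: "state \<Rightarrow> nat set" where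
  "underfull_bins s = {B\<in>occupied_bins s. B \<noteq> open_bin s \<and> load s B < \<alpha>}"

definition dissolve :: "nat \<Rightarrow> state \<Rightarrow> state" where
  "dissolve B s =
     (if even B \<and> B \<noteq> open_bin s \<and> load s B < \<alpha> then
        if load s (open_bin s) + load s B \<le> 1 then merge_into_open B s else s\<lparr>open_bin := B\<rparr>
      else s)"

definition depart :: "nat \<Rightarrow> state \<Rightarrow> state" where
  "depart i s = (if i \<in> present_items s then dissolve (bin s i) (remove_item i s) else remove_item i s)"

definition arrive :: "nat \<Rightarrow> real \<Rightarrow> state \<Rightarrow> state" where
  "arrive i x s =
     (if i \<in> arrived s then s
      else if i \<in> departed s then record_arrival i x s
      else if \<alpha> \<le> x then place i x (2 * i + 1) s
      else if load s (open_bin s) + x \<le> 1 then place i x (open_bin s) s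
      else place i x (2 * bins_used s) (open_fresh_bin s))"

definition wf_state :: "state \<Rightarrow> bool" where
  "wf_state s \<longleftrightarrow> finite (arrived s)
     \<and> (\<forall>i\<in>arrived s. 0 \<le> item_size s i \<and> item_size s i \<le> 1)
     \<and> (\<forall>i. i \<notin> arrived s \<longrightarrow> moves s i = 0)
     \<and> even (open_bin s) \<and> open_bin s < 2 * bins_used s
     \<and> (\<forall>j\<in>present_items s. even (bin s j) \<longrightarrow> bin s j < 2 * bins_used s)
     \<and> (\<forall>j\<in>present_items s. odd (bin s j) \<longrightarrow> bin s j = 2 * j + 1 \<and> \<alpha> \<le> item_size s j)
     \<and> (\<forall>B. load s B \<le> 1)"

definition amortized :: "state \<Rightarrow> bool" where
  "amortized s \<longleftrightarrow> migrated_volume s + potential s \<le> ratio * departed_volume s"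

definition invariant :: "state \<Rightarrow> bool" where
  "invariant s \<longleftrightarrow> wf_state s \<and> amortized s \<and> underfull_bins s = {}"

lemma ratio_pos: "0 < ratio"
  using alpha_pos alpha_less_half unfolding ratio_def by simp

lemma deficit_nonneg: "0 \<le> deficit l"
  using ratio_pos unfolding deficit_def by simp

lemma deficit_eq_0: "1 - \<alpha> \<le> l \<Longrightarrow> deficit l = 0"
  unfolding deficit_def by simp

lemma deficit_antimono: "l \<le> l' \<Longrightarrow> deficit l' \<le> deficit l"
  using ratio_pos unfolding deficit_def by (intro mult_left_mono) auto

lemma deficit_diff_le: "0 \<le> y \<Longrightarrow> deficit (l - y) \<le> deficit l + ratio * y"
  using ratio_pos unfolding deficit_def
  by (simp add: distrib_left[symmetric] mult_left_mono)

text \<open>This is what fixes the value of \<open>ratio\<close>: both sides agree at \<open>l = \<alpha>\<close>.\<close>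

lemma le_deficit:
  assumes "0 \<le> l" and "l < \<alpha>"
  shows "l \<le> deficit l"
proof -
  have "l * (1 - 2 * \<alpha>) \<le> \<alpha> * (1 - \<alpha> - l)"
    using assms alpha_less_half mult_right_mono[of l \<alpha> "1 - \<alpha>"] by (simp add: algebra_simps)
  then show ?thesis
    using assms alpha_less_half unfolding deficit_def ratio_def by (simp add: field_simps)
qed

lemma potential_nonneg: "0 \<le> potential s"
  unfolding potential_def by (intro sum_nonneg deficit_nonneg)

lemma potential_le:
  assumes "finite (arrived s)" and "finite (arrived s')"
    and "closed_bins s' \<subseteq> closed_bins s \<union> {B. 1 - \<alpha> \<le> load s' B}"
    and "\<And>B. B \<in> closed_bins s' \<Longrightarrow> B \<in> closed_bins s \<Longrightarrow> load s B \<le> load s' B"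
  shows "potential s' \<le> potential s"
proof -
  have "potential s' = (\<Sum>B\<in>closed_bins s' \<inter> closed_bins s. deficit (load s' B))"
    unfolding potential_def
    by (rule sum.mono_neutral_right) (use assms(2,3) in \<open>auto simp: finite_closed_bins deficit_eq_0\<close>)
  also have "\<dots> \<le> (\<Sum>B\<in>closed_bins s' \<inter> closed_bins s. deficit (load s B))"
    using assms(4) by (intro sum_mono deficit_antimono) auto
  also have "\<dots> \<le> potential s"
    unfolding potential_def using assms(1)
    by (intro sum_mono2) (auto simp: finite_closed_bins deficit_nonneg)
  finally show ?thesis .
qed

lemma load_nonneg: "wf_state s \<Longrightarrow> 0 \<le> load s B"
  unfolding wf_state_def load_def contents_def present_items_def by (intro sum_nonneg) auto

lemma potential_remove_item_le:
  assumes wf: "wf_state s" and i: "i \<in> present_items s"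
  shows "potential (remove_item i s) \<le> potential s + ratio * item_size s i"
proof -
  let ?s = "remove_item i s"
  have fin: "finite (arrived s)" and size: "0 \<le> item_size s i"
    using wf i present_items_subset_arrived unfolding wf_state_def by auto
  have closed: "closed_bins ?s \<subseteq> closed_bins s"
    unfolding closed_bins_def occupied_bins_def present_items_remove_item by auto
  have "potential ?s \<le> (\<Sum>B\<in>closed_bins ?s. deficit (load s B) + (if B = bin s i then ratio * item_size s i else 0))"
    unfolding potential_def load_remove_item[OF fin i]
    using deficit_diff_le[OF size] by (intro sum_mono) auto
  also have "\<dots> \<le> (\<Sum>B\<in>closed_bins s. deficit (load s B)) + ratio * item_size s i"
    using closed finite_closed_bins[OF fin] ratio_pos size
    by (simp add: sum.distrib finite_subset sum_mono2 deficit_nonneg add_mono)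
  finally show ?thesis unfolding potential_def .
qed

lemma almost_invariant_remove_item:
  assumes inv: "invariant s" and i: "i \<in> present_items s"
  shows "wf_state (remove_item i s)" and "amortized (remove_item i s)"
    and "underfull_bins (remove_item i s) \<subseteq> {bin s i}"
proof -
  let ?s = "remove_item i s"
  have wf: "wf_state s" and am: "amortized s" and full: "underfull_bins s = {}"
    using inv unfolding invariant_def by auto
  have fin: "finite (arrived s)" and size: "0 \<le> item_size s i"
    using wf i present_items_subset_arrived unfolding wf_state_def by auto
  note ld = load_remove_item[OF fin i]
  have "load ?s B \<le> 1" for B
    using wf size unfolding ld wf_state_def by (smt (verit))
  then show "wf_state ?s"
    using wf unfolding wf_state_def present_items_remove_item by auto
  show "amortized ?s"
    using am potential_remove_item_le[OF wf i] ratio_pos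
    unfolding amortized_def departed_volume_remove_item[OF fin i]
    by (simp add: migrated_volume_def algebra_simps)
  show "underfull_bins ?s \<subseteq> {bin s i}"
    using full unfolding underfull_bins_def occupied_bins_def present_items_remove_item ld by auto
qed

lemma invariant_switch_open_bin:
  assumes wf: "wf_state s" and am: "amortized s" and under: "underfull_bins s \<subseteq> {B}"
    and B: "even B" "B < 2 * k" and k: "bins_used s \<le> k"
    and full: "1 - \<alpha> \<le> load s (open_bin s)"
  shows "invariant (s\<lparr>open_bin := B, bins_used := k\<rparr>)"
proof -
  let ?s = "s\<lparr>open_bin := B, bins_used := k\<rparr>"
  have same: "present_items ?s = present_items s" "load ?s = load s" "occupied_bins ?s = occupied_bins s"
    unfolding present_items_def occupied_bins_def by (auto intro: load_cong simp: present_items_def)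
  have fin: "finite (arrived s)" using wf unfolding wf_state_def by simp
  have "potential ?s \<le> potential s"
    by (rule potential_le) (use fin full in \<open>auto simp: same closed_bins_def\<close>)
  then have "amortized ?s"
    using am unfolding amortized_def migrated_volume_def departed_volume_def by simp
  moreover have "wf_state ?s"
    using wf B k unfolding wf_state_def same by auto
  moreover have "underfull_bins ?s = {}"
    using under full alpha_less_half unfolding underfull_bins_def same by auto
  ultimately show ?thesis unfolding invariant_def by simp
qed

lemma invariant_merge_into_open:
  assumes wf: "wf_state s" and am: "amortized s" and under: "underfull_bins s \<subseteq> {B}"
    and B: "even B" "B \<noteq> open_bin s" "load s B < \<alpha>"
    and fits: "load s (open_bin s) + load s B \<le> 1"
  shows "invariant (merge_into_open B s)"
proof -
  let ?s = "merge_into_open B s"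
  have fin: "finite (arrived s)" using wf unfolding wf_state_def by simp
  note ld = load_merge_into_open[OF fin B(2)]
  have occ: "occupied_bins ?s \<subseteq> insert (open_bin s) (occupied_bins s - {B})"
    unfolding occupied_bins_def using B(2) by (auto simp: contents_def)
  then have closed: "closed_bins ?s \<subseteq> closed_bins s - {B}"
    unfolding closed_bins_def by auto
  have "potential ?s = (\<Sum>B'\<in>closed_bins ?s. deficit (load s B'))"
    unfolding potential_def ld using closed by (intro sum.cong) (auto simp: closed_bins_def)
  also have "\<dots> \<le> (\<Sum>B'\<in>closed_bins s - {B}. deficit (load s B'))"
    using closed finite_closed_bins[OF fin] by (intro sum_mono2) (auto simp: deficit_nonneg)
  also have "\<dots> \<le> potential s - load s B"
  proof (cases "B \<in> closed_bins s")
    case True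
    \<comment> \<open>the deficit released by \<open>B\<close> pays for moving its load\<close>
    then show ?thesis
      using le_deficit[OF load_nonneg[OF wf] B(3)] finite_closed_bins[OF fin]
      unfolding potential_def by (simp add: sum_diff1)
  next
    case False
    then have "load s B = 0" using B by (intro load_eq_0) (auto simp: closed_bins_def)
    then show ?thesis using False unfolding potential_def by simp
  qed
  finally have "amortized ?s"
    using am unfolding amortized_def migrated_volume_merge_into_open[OF fin]
    by (simp add: departed_volume_def)
  moreover have "wf_state ?s"
    using wf fits present_items_subset_arrived unfolding wf_state_def ld by (auto simp: contents_def)
  moreover have "underfull_bins ?s = {}"
    using under occ B(2) unfolding underfull_bins_def ld by auto
  ultimately show ?thesis unfolding invariant_def by simp
qed

lemma invariant_dissolve:
  assumes wf: "wf_state s" and am: "amortized s" and under: "underfull_bins s \<subseteq> {B}"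
    and odd_B: "odd B \<Longrightarrow> B \<notin> occupied_bins s"
  shows "invariant (dissolve B s)"
proof (cases "even B \<and> B \<noteq> open_bin s \<and> load s B < \<alpha>")
  case False
  then have "underfull_bins s = {}"
    using under odd_B unfolding underfull_bins_def by auto
  moreover have "dissolve B s = s" unfolding dissolve_def by (rule if_not_P[OF False])
  ultimately show ?thesis using wf am unfolding invariant_def by simp
next
  case dissolved: True
  show ?thesis
  proof (cases "load s (open_bin s) + load s B \<le> 1")
    case True
    then show ?thesis
      using dissolved invariant_merge_into_open[OF wf am under] unfolding dissolve_def by simp
  next
    case False
    then have "load s B \<noteq> 0" using wf unfolding wf_state_def by auto
    then have "B \<in> occupied_bins s" using load_eq_0 by blast
    then have "B < 2 * bins_used s"
      using wf dissolved unfolding wf_state_def occupied_bins_def by auto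
    moreover have "1 - \<alpha> \<le> load s (open_bin s)" using False dissolved by simp
    ultimately have "invariant (s\<lparr>open_bin := B, bins_used := bins_used s\<rparr>)"
      using dissolved by (intro invariant_switch_open_bin[OF wf am under]) auto
    then show ?thesis using dissolved False unfolding dissolve_def by simp
  qed
qed

lemma invariant_depart:
  assumes inv: "invariant s"
  shows "invariant (depart i s)"
proof (cases "i \<in> present_items s")
  case True
  have wf: "wf_state s" using inv unfolding invariant_def by simp
  have "bin s i \<notin> occupied_bins (remove_item i s)" if odd: "odd (bin s i)"
  proof
    assume "bin s i \<in> occupied_bins (remove_item i s)"
    then obtain j where j: "j \<in> present_items s" "j \<noteq> i" "bin s j = bin s i"
      unfolding occupied_bins_def present_items_remove_item by force
    have "bin s j = 2 * j + 1" "bin s i = 2 * i + 1"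
      using wf True j odd unfolding wf_state_def by auto
    then show False using j by simp
  qed
  then have "invariant (dissolve (bin s i) (remove_item i s))"
    using almost_invariant_remove_item[OF inv True] by (intro invariant_dissolve) auto
  then show ?thesis using True unfolding depart_def by simp
next
  case False
  have "remove_item i s = s" if "i \<in> arrived s"
    using False that unfolding remove_item_def present_items_def by (simp add: insert_absorb)
  moreover have "invariant (remove_item i s)" if new: "i \<notin> arrived s"
  proof -
    let ?s = "remove_item i s"
    have present: "present_items ?s = present_items s"
      using False unfolding present_items_remove_item by simp
    have ld: "load ?s = load s" by (rule load_cong) (auto simp: present)
    have "potential ?s = potential s" "underfull_bins ?s = underfull_bins s"
      unfolding potential_def underfull_bins_def closed_bins_def occupied_bins_def present ld
      by simp_all
    moreover have "departed_volume ?s = departed_volume s"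
      using new unfolding departed_volume_def by (simp add: Int_insert_right)
    ultimately show ?thesis
      using inv unfolding invariant_def wf_state_def amortized_def migrated_volume_def present ld
      by simp
  qed
  ultimately show ?thesis using inv False unfolding depart_def by (cases "i \<in> arrived s") simp_all
qed

lemma invariant_record_arrival:
  assumes inv: "invariant s" and i: "i \<notin> arrived s" "i \<in> departed s" and x: "0 \<le> x" "x \<le> 1"
  shows "invariant (record_arrival i x s)"
proof -
  let ?s = "record_arrival i x s"
  have wf: "wf_state s" using inv unfolding invariant_def by simp
  have fin: "finite (arrived s)" using wf unfolding wf_state_def by simp
  note present = present_items_record_arrival[OF i(2)]
  have ld: "load ?s = load s"
    by (rule load_cong) (use i present_items_subset_arrived in \<open>auto simp: present\<close>)
  have "potential ?s = potential s" "underfull_bins ?s = underfull_bins s"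
    unfolding potential_def underfull_bins_def closed_bins_def occupied_bins_def present ld
    by simp_all
  moreover have "migrated_volume ?s = migrated_volume s"
    using wf i fin unfolding migrated_volume_def wf_state_def by (auto intro!: sum.cong)
  moreover have "departed_volume ?s = departed_volume s + x"
  proof -
    have "arrived ?s \<inter> departed ?s = insert i (arrived s \<inter> departed s)"
      using i by auto
    then show ?thesis
      using fin i unfolding departed_volume_def by (auto intro!: sum.cong)
  qed
  moreover have "i \<notin> present_items s" using i present_items_subset_arrived by auto
  ultimately show ?thesis
    using inv x ratio_pos unfolding invariant_def wf_state_def amortized_def present ld
    by (auto intro: order_trans[OF _ mult_left_mono])
qed

lemma invariant_place:
  assumes inv: "invariant s" and new: "i \<notin> arrived s" "i \<notin> departed s"
    and x: "0 \<le> x" "x \<le> 1" and fits: "load s L + x \<le> 1"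
    and L: "L = open_bin s \<or> L = 2 * i + 1 \<and> \<alpha> \<le> x"
  shows "invariant (place i x L s)"
proof -
  let ?s = "place i x L s"
  have wf: "wf_state s" and am: "amortized s" and full: "underfull_bins s = {}"
    using inv unfolding invariant_def by auto
  have fin: "finite (arrived s)" using wf unfolding wf_state_def by simp
  note ld = load_place[OF fin new]
  note occ = occupied_bins_place[OF new]
  have closed: "closed_bins ?s = closed_bins s"
    using L unfolding closed_bins_def occ by auto
  have "potential ?s \<le> potential s"
    by (rule potential_le) (use fin x in \<open>auto simp: closed ld\<close>)
  then have "amortized ?s"
    using am wf new unfolding amortized_def wf_state_def
    by (simp add: migrated_volume_place departed_volume_place)
  moreover have "wf_state ?s"
    using wf x fits L new present_items_subset_arrived
    unfolding wf_state_def ld present_items_place[OF new(2)] by auto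
  moreover have "underfull_bins ?s = {}"
    using full L load_nonneg[OF wf, of L] unfolding underfull_bins_def occ ld by auto
  ultimately show ?thesis unfolding invariant_def by simp
qed

lemma invariant_open_fresh_bin:
  assumes inv: "invariant s" and full: "1 - \<alpha> \<le> load s (open_bin s)"
  shows "invariant (open_fresh_bin s)"
proof -
  have "invariant (s\<lparr>open_bin := 2 * bins_used s, bins_used := Suc (bins_used s)\<rparr>)"
    by (intro invariant_switch_open_bin) (use inv full in \<open>auto simp: invariant_def\<close>)
  then show ?thesis unfolding open_fresh_bin_def .
qed

lemma load_open_fresh_bin:
  assumes "wf_state s"
  shows "load (open_fresh_bin s) (open_bin (open_fresh_bin s)) = 0"
proof -
  have "load (open_fresh_bin s) = load s" by (rule load_cong) (simp_all add: present_items_def)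
  moreover have "bin s j \<noteq> 2 * bins_used s" if "j \<in> present_items s" for j
    using assms that unfolding wf_state_def by (cases "even (bin s j)") auto
  then have "2 * bins_used s \<notin> occupied_bins s" unfolding occupied_bins_def by (metis imageE)
  ultimately show ?thesis using load_eq_0 by simp
qed

lemma invariant_arrive:
  assumes inv: "invariant s" and x: "0 \<le> x" "x \<le> 1"
  shows "invariant (arrive i x s)"
proof -
  have wf: "wf_state s" using inv unfolding invariant_def by simp
  consider "i \<in> arrived s" | "i \<notin> arrived s" "i \<in> departed s"
    | (new) "i \<notin> arrived s" "i \<notin> departed s"
    by blast
  then show ?thesis
  proof cases
    case new
    have "bin s j \<noteq> 2 * i + 1" if "j \<in> present_items s" for j
      using wf that new present_items_subset_arrived unfolding wf_state_def by fastforce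
    then have "load s (2 * i + 1) = 0" unfolding occupied_bins_def by (metis imageE load_eq_0 occupied_bins_def)
    moreover have "invariant (place i x (2 * bins_used s) (open_fresh_bin s))"
      if "\<not> load s (open_bin s) + x \<le> 1" "\<not> \<alpha> \<le> x"
      using that new x load_open_fresh_bin[OF wf]
      by (intro invariant_place invariant_open_fresh_bin[OF inv]) auto
    ultimately show ?thesis
      using new inv x unfolding arrive_def by (auto intro!: invariant_place)
  qed (use inv x invariant_record_arrival in \<open>auto simp: arrive_def\<close>)
qed

end

section \<open>Running the algorithm on an instance\<close>

type_synonym event = "real \<times> nat \<times> nat \<times> real"

text \<open>An event \<open>(t, k, i, x)\<close> at time \<open>t\<close> concerns item \<open>i\<close> of size \<open>x\<close>; it is a departure
  if \<open>k = 0\<close> and an arrival if \<open>k = 1\<close>, so the lexicographic order is chronological.\<close>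

definition view_events :: "view \<Rightarrow> event set" where
  "view_events v = {(a, 1, i, x) | a i x e. v i = Some (a, x, e)}
     \<union> {(e, 0, i, x) | a i x e. v i = Some (a, x, Some e)}"

definition instance_events ::
  "nat \<Rightarrow> (nat \<Rightarrow> real) \<Rightarrow> (nat \<Rightarrow> real) \<Rightarrow> (nat \<Rightarrow> real) \<Rightarrow> event set" where
  "instance_events n a s d =
     (\<lambda>i. (a i, 1, i, s i)) ` {..<n} \<union> (\<lambda>i. (a i + d i, 0, i, s i)) ` {..<n}"

lemma finite_instance_events: "finite (instance_events n a s d)"
  unfolding instance_events_def by simp

lemma view_events_view_at:
  assumes "valid_instance n a s d"
  shows "view_events (view_at n a s d t) = {e \<in> instance_events n a s d. fst e \<le> t}"
proof (intro set_eqI iffI)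
  fix e assume "e \<in> view_events (view_at n a s d t)"
  then show "e \<in> {e \<in> instance_events n a s d. fst e \<le> t}"
    unfolding view_events_def view_at_def instance_events_def by (auto split: if_splits)
next
  fix e assume "e \<in> {e \<in> instance_events n a s d. fst e \<le> t}"
  then consider (arrival) i where "i < n" "e = (a i, 1, i, s i)" "a i \<le> t"
    | (departure) i where "i < n" "e = (a i + d i, 0, i, s i)" "a i + d i \<le> t"
    unfolding instance_events_def by auto
  then show "e \<in> view_events (view_at n a s d t)"
  proof cases
    case departure
    moreover have "0 < d i" using assms departure(1) unfolding valid_instance_def by simp
    ultimately show ?thesis unfolding view_events_def view_at_def by auto
  qed (auto simp: view_events_def view_at_def)
qed

context dynamic_packing
begin

definition step :: "event \<Rightarrow> state \<Rightarrow> state" where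
  "step = (\<lambda>(t, k, i, x). if k = 0 then depart i else arrive i x)"

lemma invariant_step: "invariant s \<Longrightarrow> 0 \<le> x \<Longrightarrow> x \<le> 1 \<Longrightarrow> invariant (step (t, k, i, x) s)"
  unfolding step_def by (simp add: invariant_depart invariant_arrive)

lemma dissolve_simps [simp]:
  "arrived (dissolve B s) = arrived s" "departed (dissolve B s) = departed s"
  "item_size (dissolve B s) = item_size s"
  by (simp_all add: dissolve_def)

lemma moves_dissolve:
  "moves s j \<le> moves (dissolve B s) j"
  "bin (dissolve B s) j \<noteq> bin s j \<Longrightarrow> moves (dissolve B s) j = Suc (moves s j)"
  by (auto simp: dissolve_def split: if_splits)

lemma depart_simps [simp]:
  "arrived (depart i s) = arrived s" "departed (depart i s) = insert i (departed s)"
  "item_size (depart i s) = item_size s"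
  by (simp_all add: depart_def)

lemma moves_depart:
  "moves s j \<le> moves (depart i s) j"
  "bin (depart i s) j \<noteq> bin s j \<Longrightarrow> moves (depart i s) j = Suc (moves s j)"
  using moves_dissolve[where s = "remove_item i s" and j = j] by (auto simp: depart_def split: if_splits)

lemma arrive_simps [simp]:
  "arrived (arrive i x s) = insert i (arrived s)" "departed (arrive i x s) = departed s"
  "item_size (arrive i x s) = (if i \<in> arrived s then item_size s else (item_size s)(i := x))"
  "moves (arrive i x s) = moves s"
  by (simp_all add: arrive_def insert_absorb)

lemma bin_arrive: "j \<in> arrived s \<Longrightarrow> bin (arrive i x s) j = bin s j"
  by (auto simp: arrive_def)

lemma step_simps:
  "arrived (step (t, k, i, x) s) = (if k = 0 then arrived s else insert i (arrived s))"
  "departed (step (t, k, i, x) s) = (if k = 0 then insert i (departed s) else departed s)"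
  "item_size (step (t, k, i, x) s) =
     (if k = 0 \<or> i \<in> arrived s then item_size s else (item_size s)(i := x))"
  by (simp_all add: step_def)

lemma moves_step:
  "moves s j \<le> moves (step e s) j"
  "j \<in> arrived s \<Longrightarrow> bin (step e s) j \<noteq> bin s j \<Longrightarrow> moves (step e s) j = Suc (moves s j)"
proof -
  obtain t k i x where e: "e = (t, k, i, x)" by (cases e)
  show "moves s j \<le> moves (step e s) j"
    using moves_depart(1) by (simp add: e step_def)
  show "j \<in> arrived s \<Longrightarrow> bin (step e s) j \<noteq> bin s j \<Longrightarrow> moves (step e s) j = Suc (moves s j)"
    using moves_depart(2) bin_arrive by (auto simp: e step_def split: if_splits)
qed

lemma arrived_fold_step:
  "arrived (fold step es s) = arrived s \<union> {i. \<exists>t k x. (t, k, i, x) \<in> set es \<and> k \<noteq> 0}"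
proof (induction es arbitrary: s)
  case (Cons e es)
  obtain t k i x where "e = (t, k, i, x)" by (cases e)
  with Cons show ?case by (auto simp: step_simps)
qed simp

lemma departed_fold_step:
  "departed (fold step es s) = departed s \<union> {i. \<exists>t k x. (t, k, i, x) \<in> set es \<and> k = 0}"
proof (induction es arbitrary: s)
  case (Cons e es)
  obtain t k i x where "e = (t, k, i, x)" by (cases e)
  with Cons show ?case by (auto simp: step_simps)
qed simp

lemma item_size_fold_step:
  "\<forall>(t, k, i, x)\<in>set es. k \<noteq> 0 \<longrightarrow> x = \<sigma> i \<Longrightarrow> \<forall>i\<in>arrived s. item_size s i = \<sigma> i \<Longrightarrow>
    \<forall>i\<in>arrived (fold step es s). item_size (fold step es s) i = \<sigma> i"
proof (induction es arbitrary: s)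
  case (Cons e es)
  obtain t k i x where "e = (t, k, i, x)" by (cases e)
  with Cons.prems have "\<forall>j\<in>arrived (step e s). item_size (step e s) j = \<sigma> j"
    by (auto simp: step_simps)
  then show ?case using Cons by simp
qed simp

lemma invariant_fold_step:
  "invariant s \<Longrightarrow> \<forall>(t, k, i, x)\<in>set es. 0 \<le> x \<and> x \<le> 1 \<Longrightarrow> invariant (fold step es s)"
proof (induction es arbitrary: s)
  case (Cons e es)
  obtain t k i x where "e = (t, k, i, x)" by (cases e)
  with Cons show ?case by (simp add: invariant_step)
qed simp

lemma moves_fold_step_mono: "moves s j \<le> moves (fold step es s) j"
proof (induction es arbitrary: s)
  case (Cons e es)
  then show ?case using moves_step(1)[of s j e] by (simp add: le_trans)
qed simp

lemma moves_fold_step_less: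
  assumes "j \<in> present_items s" and "j \<in> present_items (fold step es s)"
    and "bin (fold step es s) j \<noteq> bin s j"
  shows "moves s j < moves (fold step es s) j"
  using assms
proof (induction es arbitrary: s)
  case (Cons e es)
  obtain t k i x where e: "e = (t, k, i, x)" by (cases e)
  have step: "j \<in> present_items (step e s)"
    using Cons.prems(1,2) unfolding present_items_def e
    by (auto simp: step_simps departed_fold_step)
  show ?case
  proof (cases "bin (step e s) j = bin s j")
    case True
    then have "moves (step e s) j < moves (fold step es (step e s)) j"
      using Cons.IH[OF step] Cons.prems(2,3) by simp
    then show ?thesis using moves_step(1)[where s = s and j = j and e = e] by simp
  next
    case False
    then have "moves (step e s) j = Suc (moves s j)"
      using moves_step(2) Cons.prems(1) present_items_subset_arrived by blast
    then show ?thesis using moves_fold_step_mono[of "step e s" j es] by simp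
  qed
qed simp

lemma invariant_init_state: "invariant init_state"
proof -
  have "present_items init_state = {}" unfolding init_state_def present_items_def by simp
  then have "load init_state = (\<lambda>_. 0)" and "occupied_bins init_state = {}"
    unfolding load_def contents_def occupied_bins_def by auto
  then show ?thesis
    unfolding invariant_def wf_state_def amortized_def potential_def underfull_bins_def
      closed_bins_def migrated_volume_def departed_volume_def \<open>present_items init_state = {}\<close>
    by (simp add: init_state_def)
qed

definition online_algorithm :: algorithm where
  "online_algorithm v = bin (fold step (sorted_list_of_set (view_events v)) init_state)"

definition state_at :: "nat \<Rightarrow> (nat \<Rightarrow> real) \<Rightarrow> (nat \<Rightarrow> real) \<Rightarrow> (nat \<Rightarrow> real) \<Rightarrow> real \<Rightarrow> state" where
  "state_at n a s d t =
     fold step (filter (\<lambda>e. fst e \<le> t) (sorted_list_of_set (instance_events n a s d))) init_state"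

lemma alg_packing_online_algorithm:
  assumes "valid_instance n a s d"
  shows "alg_packing online_algorithm n a s d t = bin (state_at n a s d t)"
  unfolding alg_packing_def online_algorithm_def state_at_def view_events_view_at[OF assms]
  by (simp add: sorted_list_of_set_filter finite_instance_events)

lemma state_at_split:
  assumes "t' \<le> t"
  shows "state_at n a s d t = fold step (filter (\<lambda>e. t' < fst e \<and> fst e \<le> t)
    (sorted_list_of_set (instance_events n a s d))) (state_at n a s d t')"
  unfolding state_at_def
  by (subst filter_sorted_le_split[OF _ assms]) (simp_all add: sorted_map_fst_lex)

lemma arrived_state_at: "arrived (state_at n a s d t) = {i. i < n \<and> a i \<le> t}"
  unfolding state_at_def arrived_fold_step
  by (auto simp: init_state_def instance_events_def finite_instance_events)

lemma departed_state_at: "departed (state_at n a s d t) = {i. i < n \<and> a i + d i \<le> t}"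
  unfolding state_at_def departed_fold_step
  by (auto simp: init_state_def instance_events_def finite_instance_events)

lemma present_items_state_at: "present_items (state_at n a s d t) = present n a d t"
  unfolding present_items_def arrived_state_at departed_state_at present_def by auto

lemma item_size_state_at:
  assumes "i \<in> arrived (state_at n a s d t)"
  shows "item_size (state_at n a s d t) i = s i"
proof -
  have "\<forall>(t', k, j, x)\<in>set (filter (\<lambda>e. fst e \<le> t) (sorted_list_of_set (instance_events n a s d))).
      k \<noteq> 0 \<longrightarrow> x = s j"
    by (auto simp: finite_instance_events instance_events_def)
  from item_size_fold_step[OF this, of init_state] show ?thesis
    using assms unfolding state_at_def by (simp add: init_state_def)
qed

lemma invariant_state_at:
  assumes "valid_instance n a s d"
  shows "invariant (state_at n a s d t)"
  unfolding state_at_def using assms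
  by (intro invariant_fold_step invariant_init_state)
    (auto simp: finite_instance_events instance_events_def valid_instance_def)

lemma feasible_online_algorithm:
  assumes "valid_instance n a s d"
  shows "feasible_at online_algorithm n a s d t"
proof -
  let ?st = "state_at n a s d t"
  have "(\<Sum>i\<in>{i\<in>present n a d t. bin ?st i = b}. s i) = load ?st b" for b
    unfolding load_def contents_def present_items_state_at
    by (intro sum.cong) (auto simp: item_size_state_at arrived_state_at present_def)
  moreover have "load ?st b \<le> 1" for b
    using invariant_state_at[OF assms] unfolding invariant_def wf_state_def by simp
  ultimately show ?thesis unfolding feasible_at_def alg_packing_online_algorithm[OF assms] by simp
qed

lemma open_bins_online_algorithm:
  assumes "valid_instance n a s d"
  shows "real (open_bins online_algorithm n a s d t) \<le> real (OPT n a s d t) / \<alpha> + 1"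
proof -
  let ?st = "state_at n a s d t"
  have inv: "invariant ?st" by (rule invariant_state_at[OF assms])
  then have wf: "wf_state ?st" and fin: "finite (arrived ?st)"
    unfolding invariant_def wf_state_def by simp_all
  have "real (open_bins online_algorithm n a s d t) = real (card (occupied_bins ?st))"
    unfolding open_bins_def alg_packing_online_algorithm[OF assms] occupied_bins_def
      present_items_state_at ..
  also have "\<dots> \<le> (\<Sum>B\<in>occupied_bins ?st. load ?st B) / \<alpha> + 1"
    using inv alpha_pos load_nonneg[OF wf]
    by (intro card_le_sum_div_plus_one[where b = "open_bin ?st"] finite_occupied_bins[OF fin])
      (auto simp: invariant_def underfull_bins_def)
  also have "\<dots> = (\<Sum>i\<in>present n a d t. s i) / \<alpha> + 1"
    unfolding sum_load_occupied_bins[OF fin] present_items_state_at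
    by (simp add: item_size_state_at arrived_state_at present_def)
  also have "\<dots> \<le> real (OPT n a s d t) / \<alpha> + 1"
    using present_size_le_OPT[OF assms] alpha_pos by (simp add: divide_right_mono)
  finally show ?thesis .
qed

lemma migrations_le_moves:
  assumes valid: "valid_instance n a s d" and i: "i < n"
    and T: "\<forall>e\<in>event_times n a d. e \<le> T"
  shows "migrations online_algorithm n a s d i \<le> moves (state_at n a s d T) i"
proof -
  let ?E = "event_times n a d"
  let ?g = "\<lambda>t. moves (state_at n a s d t) i"
  have finE: "finite ?E" and arrival: "a i \<in> ?E"
    unfolding event_times_def using i by simp_all
  have mono: "mono ?g"
    by (intro monoI) (simp add: state_at_split moves_fold_step_mono)
  show ?thesis
    unfolding migrations_def alg_packing_online_algorithm[OF valid]
  proof (rule card_increase_points_le[OF finE mono])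
    fix t assume "t \<in> {t \<in> ?E. a i < t \<and> t < a i + d i \<and>
        bin (state_at n a s d t) i \<noteq> bin (state_at n a s d (Max {e \<in> ?E. e < t})) i}"
    then have t: "t \<in> ?E" "a i < t" "t < a i + d i"
      and moved: "bin (state_at n a s d t) i \<noteq> bin (state_at n a s d (Max {e \<in> ?E. e < t})) i"
      by auto
    define p where "p = Max {e \<in> ?E. e < t}"
    have "p \<in> {e \<in> ?E. e < t}"
      unfolding p_def using finE arrival t by (intro Max_in) auto
    moreover have "a i \<le> p"
      unfolding p_def using finE arrival t by (intro Max_ge) auto
    ultimately have "i \<in> present_items (state_at n a s d p)" "i \<in> present_items (state_at n a s d t)"
      and "p \<le> t"
      unfolding present_items_state_at present_def using i t by auto
    then show "?g (Max {e \<in> ?E. e < t}) < ?g t"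
      using moved unfolding p_def[symmetric] state_at_split[OF \<open>p \<le> t\<close>]
      by (intro moves_fold_step_less)
    show "?g t \<le> ?g T" using T t(1) by (intro monoD[OF mono]) simp
  qed auto
qed

lemma migrated_size_online_algorithm:
  assumes valid: "valid_instance n a s d"
  shows "migrated_size online_algorithm n a s d \<le> ratio * (\<Sum>i<n. s i)"
proof -
  define T where "T = Max (insert 0 (event_times n a d))"
  have T: "\<forall>e\<in>event_times n a d. e \<le> T"
    unfolding T_def event_times_def by simp
  let ?st = "state_at n a s d T"
  have arrived: "arrived ?st = {..<n}"
    using T unfolding arrived_state_at event_times_def by auto
  have size: "item_size ?st i = s i" "0 \<le> s i" if "i < n" for i
    using valid that item_size_state_at arrived unfolding valid_instance_def by auto
  have "migrated_size online_algorithm n a s d \<le> (\<Sum>i<n. s i * real (moves ?st i))"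
    unfolding migrated_size_def using migrations_le_moves[OF valid _ T] size(2)
    by (intro sum_mono mult_left_mono) auto
  also have "\<dots> = migrated_volume ?st"
    unfolding migrated_volume_def arrived using size(1) by simp
  also have "\<dots> \<le> ratio * departed_volume ?st"
    using invariant_state_at[OF valid, of T] potential_nonneg[of ?st]
    unfolding invariant_def amortized_def by linarith
  also have "\<dots> \<le> ratio * (\<Sum>i<n. s i)"
  proof -
    have "departed_volume ?st = (\<Sum>i\<in>{..<n} \<inter> departed ?st. s i)"
      unfolding departed_volume_def arrived using size by simp
    also have "\<dots> \<le> (\<Sum>i<n. s i)"
      using size by (intro sum_mono2) auto
    finally show ?thesis using ratio_pos by simp
  qed
  finally show ?thesis .
qed

end

theorem theorem22:
  fixes \<alpha> :: real
  assumes "0 < \<alpha>" and "\<alpha> < 1/2"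
  shows "\<exists>A :: algorithm. \<forall>n a s d. valid_instance n a s d \<longrightarrow>
           (\<forall>t. feasible_at A n a s d t) \<and>
           migrated_size A n a s d \<le> \<alpha> / (1 - 2 * \<alpha>) * (\<Sum>i<n. s i) \<and>
           (\<forall>t. real (open_bins A n a s d t) \<le> real (OPT n a s d t) / \<alpha> + 1)"
proof -
  interpret dynamic_packing \<alpha> using assms by unfold_locales
  show ?thesis
    using feasible_online_algorithm migrated_size_online_algorithm open_bins_online_algorithm
    unfolding ratio_def by blast
qed

end
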